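(* For a finite set $I$ let $co\mathcal{BVH}gra(I)$ be the free graded commutative algebra over a field $\mathbb K$ of characteristic zero generated by degree $1$ variables $\theta_{ij}=\theta_{ji}$ ($i\neq j\in I$) and degree $2$ variables $\Theta_{ijk}$ ($i,j,k\in I$) satisfying $\Theta_{ijk}=-\Theta_{jik}=-\Theta_{ikj}$, with no further relations. For a decomposition $I=I'\sqcup I''$ into nonempty subsets and new symbols $x',x''$, define algebra morphisms $\Delta_{I',I''}:co\mathcal{BVH}gra(I)\to co\mathcal{BVH}gra(I'\sqcup\{x'\})\otimes co\mathcal{BVH}gra(\{x''\}\sqcup I'')$ on generators by $$\Delta_{I',I''}(\theta_{ij})=\begin{cases}\theta_{ij}\otimes1& i,j\in I'\\ 1\otimes\theta_{ij}& i,j\in I''\\ \theta_{ix'}\otimes1+1\otimes\theta_{x''j}& i\in I',\ j\in I''\end{cases}$$ $$\Delta_{I',I''}(\Theta_{ijk})=\begin{cases}\Theta_{ijk}\otimes1& i,j,k\in I'\\ 1\otimes\Theta_{ijk}& i,j,k\in I''\\ \Theta_{ijx'}\otimes1-(\theta_{ix'}-\theta_{jx'})\otimes\theta_{x''k}& i,j\in I',\ k\in I''\\ 1\otimes\Theta_{x''jk}+\theta_{ix'}\otimes(\theta_{x''j}-\theta_{x''k})& i\in I',\ j,k\in I''\end{cases}$$ (the remaining cases being determined by the symmetries of $\theta$ and $\Theta$). Then this makes $co\mathcal{BVH}gra=\{co\mathcal{BVH}gra(I)\}$ a cyclic Hopf cooperad: the maps are natural in $I$ and for every decomposition $I=I'\sqcup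 I''\sqcup I'''$ into nonempty subsets one has $\Phi^L_{I',I'',I'''}=\Phi^R_{I',I'',I'''}$, where $\Phi^R=(\mathrm{Id}\otimes\Delta_{\{x''\}\sqcup I'',I'''})\circ\Delta_{I',I''\sqcup I'''}$ and $\Phi^L=(\Delta_{I',I''\sqcup\{y'\}}\otimes\mathrm{Id})\circ\Delta_{I'\sqcup I'',I'''}$, both mapping to $co\mathcal{BVH}gra(I'\sqcup\{x'\})\otimes co\mathcal{BVH}gra(\{x''\}\sqcup I''\sqcup\{y'\})\otimes co\mathcal{BVH}gra(\{y''\}\sqcup I''')$.
   Context: A cyclic cooperad is a functor $I\mapsto co\mathcal O(I)$ from the groupoid of finite sets to graded vector spaces together with natural maps $\Delta_{I',I''}:co\mathcal O(I)\to co\mathcal O(I'\sqcup\{x'\})\otimes co\mathcal O(\{x''\}\sqcup I'')$ for decompositions $I=I'\sqcup I''$ satisfying the coassociativity $\Phi^L=\Phi^R$ as written in the claim; it is Hopf if each $co\mathcal O(I)$ is a graded commutative algebra and all $\Delta_{I',I''}$ are algebra morphisms. No relation between the variables $\theta$ and $\Theta$ is imposed. *)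

theory Defs
  imports Main
begin

datatype ('g,'k) fexpr =
    Gen 'g
  | Sc 'k
  | Plus "('g,'k) fexpr" "('g,'k) fexpr"
  | Times "('g,'k) fexpr" "('g,'k) fexpr"

fun gens_of :: "('g,'k) fexpr \<Rightarrow> 'g set" where
  "gens_of (Gen g) = {g}"
| "gens_of (Sc a) = {}"
| "gens_of (Plus a b) = gens_of a \<union> gens_of b"
| "gens_of (Times a b) = gens_of a \<union> gens_of b"

definition wf_over :: "'g set \<Rightarrow> ('g,'k) fexpr \<Rightarrow> bool" where
  "wf_over G e \<longleftrightarrow> gens_of e \<subseteq> G"

fun subst :: "('g \<Rightarrow> ('h,'k) fexpr) \<Rightarrow> ('g,'k) fexpr \<Rightarrow> ('h,'k) fexpr" where
  "subst \<sigma> (Gen g) = \<sigma> g"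
| "subst \<sigma> (Sc a) = Sc a"
| "subst \<sigma> (Plus a b) = Plus (subst \<sigma> a) (subst \<sigma> b)"
| "subst \<sigma> (Times a b) = Times (subst \<sigma> a) (subst \<sigma> b)"

abbreviation Neg :: "('g,'k::ring_1) fexpr \<Rightarrow> ('g,'k) fexpr" where
  "Neg a \<equiv> Times (Sc (-1)) a"

abbreviation Minus :: "('g,'k::ring_1) fexpr \<Rightarrow> ('g,'k) fexpr \<Rightarrow> ('g,'k) fexpr" where
  "Minus a b \<equiv> Plus a (Neg b)"

text \<open>The congruence presenting the free (associative, unital) K-algebra on the generators,
  modulo graded commutativity of generators (od = odd degree) and the relations R.
  Over a field of characteristic 0 this is the free graded commutative algebra on the
  generators modulo R.\<close>
inductive gc_eq :: "('g \<Rightarrow> bool) \<Rightarrow> (('g,'k::field) fexpr \<times> ('g,'k) fexpr) set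
                     \<Rightarrow> ('g,'k) fexpr \<Rightarrow> ('g,'k) fexpr \<Rightarrow> bool"
  for od :: "'g \<Rightarrow> bool" and R :: "(('g,'k::field) fexpr \<times> ('g,'k) fexpr) set" where
  gc_refl: "gc_eq od R a a"
| gc_sym: "gc_eq od R a b \<Longrightarrow> gc_eq od R b a"
| gc_trans: "gc_eq od R a b \<Longrightarrow> gc_eq od R b c \<Longrightarrow> gc_eq od R a c"
| gc_plus_cong: "gc_eq od R a a' \<Longrightarrow> gc_eq od R b b' \<Longrightarrow> gc_eq od R (Plus a b) (Plus a' b')"
| gc_times_cong: "gc_eq od R a a' \<Longrightarrow> gc_eq od R b b' \<Longrightarrow> gc_eq od R (Times a b) (Times a' b')"
| gc_plus_assoc: "gc_eq od R (Plus (Plus a b) c) (Plus a (Plus b c))"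
| gc_plus_comm: "gc_eq od R (Plus a b) (Plus b a)"
| gc_plus_zero: "gc_eq od R (Plus a (Sc 0)) a"
| gc_plus_neg: "gc_eq od R (Plus a (Times (Sc (-1)) a)) (Sc 0)"
| gc_times_assoc: "gc_eq od R (Times (Times a b) c) (Times a (Times b c))"
| gc_one_l: "gc_eq od R (Times (Sc 1) a) a"
| gc_one_r: "gc_eq od R (Times a (Sc 1)) a"
| gc_distrib_l: "gc_eq od R (Times a (Plus b c)) (Plus (Times a b) (Times a c))"
| gc_distrib_r: "gc_eq od R (Times (Plus a b) c) (Plus (Times a c) (Times b c))"
| gc_sc_plus: "gc_eq od R (Plus (Sc x) (Sc y)) (Sc (x + y))"
| gc_sc_times: "gc_eq od R (Times (Sc x) (Sc y)) (Sc (x * y))"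
| gc_sc_central: "gc_eq od R (Times (Sc x) a) (Times a (Sc x))"
| gc_gen_comm: "gc_eq od R (Times (Gen g) (Gen h))
                   (Times (Sc (if od g \<and> od h then -1 else 1)) (Times (Gen h) (Gen g)))"
| gc_rel: "(a, b) \<in> R \<Longrightarrow> gc_eq od R a b"

inductive homog :: "('g \<Rightarrow> nat) \<Rightarrow> ('g,'k::zero) fexpr \<Rightarrow> nat \<Rightarrow> bool" for dg where
  homog_gen: "homog dg (Gen g) (dg g)"
| homog_sc: "homog dg (Sc a) 0"
| homog_zero: "homog dg (Sc 0) n"
| homog_plus: "homog dg a n \<Longrightarrow> homog dg b n \<Longrightarrow> homog dg (Plus a b) n"
| homog_times: "homog dg a n \<Longrightarrow> homog dg b m \<Longrightarrow> homog dg (Times a b) (n + m)"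

datatype 'a bvh = th 'a 'a | Th 'a 'a 'a

fun bdeg :: "'a bvh \<Rightarrow> nat" where
  "bdeg (th _ _) = 1"
| "bdeg (Th _ _ _) = 2"

definition bvh_gens :: "'a set \<Rightarrow> 'a bvh set" where
  "bvh_gens S = {th i j | i j. i \<in> S \<and> j \<in> S \<and> i \<noteq> j}
              \<union> {Th i j k | i j k. i \<in> S \<and> j \<in> S \<and> k \<in> S}"

text \<open>coBVHgra(S_0) \<otimes> ... \<otimes> coBVHgra(S_{n-1}), for Ss = [S_0,...,S_{n-1}]:
  generators are tagged by the index of their tensor factor.  coBVHgra(I) is the case [I].\<close>
definition tgens :: "'a set list \<Rightarrow> (nat \<times> 'a bvh) set" where
  "tgens Ss = {(m, g). m < length Ss \<and> g \<in> bvh_gens (Ss ! m)}"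

definition tdeg :: "nat \<times> 'a bvh \<Rightarrow> nat" where
  "tdeg = (\<lambda>(m, g). bdeg g)"

definition trels :: "'a set list \<Rightarrow> ((nat \<times> 'a bvh, 'k::field) fexpr \<times> (nat \<times> 'a bvh, 'k) fexpr) set" where
  "trels Ss =
     {(Gen (m, th i j), Gen (m, th j i)) | m i j.
         m < length Ss \<and> i \<in> Ss ! m \<and> j \<in> Ss ! m \<and> i \<noteq> j}
   \<union> {(Gen (m, Th i j k), Neg (Gen (m, Th j i k))) | m i j k.
         m < length Ss \<and> i \<in> Ss ! m \<and> j \<in> Ss ! m \<and> k \<in> Ss ! m}
   \<union> {(Gen (m, Th i j k), Neg (Gen (m, Th i k j))) | m i j k.
         m < length Ss \<and> i \<in> Ss ! m \<and> j \<in> Ss ! m \<and> k \<in> Ss ! m}"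

definition teq :: "'a set list \<Rightarrow> (nat \<times> 'a bvh, 'k::field) fexpr \<Rightarrow> (nat \<times> 'a bvh, 'k) fexpr \<Rightarrow> bool" where
  "teq Ss = gc_eq (\<lambda>(m, g). odd (bdeg g)) (trels Ss)"

text \<open>sigma (given on generators) defines a well-defined degree-preserving morphism of graded
  algebras from the tensor product over Ss to the tensor product over Ts.\<close>
definition is_tmorph :: "'a set list \<Rightarrow> 'a set list
     \<Rightarrow> (nat \<times> 'a bvh \<Rightarrow> (nat \<times> 'a bvh, 'k::field) fexpr) \<Rightarrow> bool" where
  "is_tmorph Ss Ts \<sigma> \<longleftrightarrow>
     (\<forall>g\<in>tgens Ss. wf_over (tgens Ts) (\<sigma> g) \<and>
         (\<exists>e. wf_over (tgens Ts) e \<and> teq Ts (\<sigma> g) e \<and> homog tdeg e (tdeg g))) \<and>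
     (\<forall>a b. wf_over (tgens Ss) a \<longrightarrow> wf_over (tgens Ss) b \<longrightarrow> teq Ss a b \<longrightarrow>
         teq Ts (subst \<sigma> a) (subst \<sigma> b))"

definition Lf :: "'a bvh \<Rightarrow> (nat \<times> 'a bvh, 'k) fexpr" where  \<comment> \<open>g \<otimes> 1\<close>
  "Lf g = Gen (0, g)"

definition Rf :: "'a bvh \<Rightarrow> (nat \<times> 'a bvh, 'k) fexpr" where  \<comment> \<open>1 \<otimes> g\<close>
  "Rf g = Gen (1, g)"

definition caseA :: "'a \<Rightarrow> 'a \<Rightarrow> 'a \<Rightarrow> 'a \<Rightarrow> 'a \<Rightarrow> (nat \<times> 'a bvh, 'k::ring_1) fexpr" where
  "caseA x1 x2 i j k =
     Minus (Lf (Th i j x1)) (Times (Minus (Lf (th i x1)) (Lf (th j x1))) (Rf (th x2 k)))"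

definition caseB :: "'a \<Rightarrow> 'a \<Rightarrow> 'a \<Rightarrow> 'a \<Rightarrow> 'a \<Rightarrow> (nat \<times> 'a bvh, 'k::ring_1) fexpr" where
  "caseB x1 x2 i j k =
     Plus (Rf (Th x2 j k)) (Times (Lf (th i x1)) (Minus (Rf (th x2 j)) (Rf (th x2 k))))"

text \<open>Delta_{I1,I2} on generators, with new symbols x1 = x', x2 = x''.  The remaining cases are
  reduced to the displayed ones by the symmetries (theta_ij = theta_ji, Theta_ijk = Theta_jki).\<close>
fun delta_g :: "'a \<Rightarrow> 'a \<Rightarrow> 'a set \<Rightarrow> 'a set \<Rightarrow> 'a bvh \<Rightarrow> (nat \<times> 'a bvh, 'k::ring_1) fexpr" where
  "delta_g x1 x2 I1 I2 (th i j) =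
     (if i \<in> I1 \<and> j \<in> I1 then Lf (th i j)
      else if i \<in> I2 \<and> j \<in> I2 then Rf (th i j)
      else if i \<in> I1 \<and> j \<in> I2 then Plus (Lf (th i x1)) (Rf (th x2 j))
      else Plus (Lf (th j x1)) (Rf (th x2 i)))"
| "delta_g x1 x2 I1 I2 (Th i j k) =
     (if i \<in> I1 \<and> j \<in> I1 \<and> k \<in> I1 then Lf (Th i j k)
      else if i \<in> I2 \<and> j \<in> I2 \<and> k \<in> I2 then Rf (Th i j k)
      else if i \<in> I1 \<and> j \<in> I1 \<and> k \<in> I2 then caseA x1 x2 i j k
      else if j \<in> I1 \<and> k \<in> I1 \<and> i \<in> I2 then caseA x1 x2 j k i
      else if k \<in> I1 \<and> i \<in> I1 \<and> j \<in> I2 then caseA x1 x2 k i j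
      else if i \<in> I1 \<and> j \<in> I2 \<and> k \<in> I2 then caseB x1 x2 i j k
      else if j \<in> I1 \<and> k \<in> I2 \<and> i \<in> I2 then caseB x1 x2 j k i
      else caseB x1 x2 k i j)"

text \<open>Delta_{I1,I2} : coBVHgra(I1 \<union> I2) \<rightarrow> coBVHgra(I1 + x1) \<otimes> coBVHgra(x2 + I2).\<close>
definition Dlt :: "'a \<Rightarrow> 'a \<Rightarrow> 'a set \<Rightarrow> 'a set \<Rightarrow> nat \<times> 'a bvh \<Rightarrow> (nat \<times> 'a bvh, 'k::ring_1) fexpr" where
  "Dlt x1 x2 I1 I2 = (\<lambda>(m, g). delta_g x1 x2 I1 I2 g)"

definition shiftT :: "nat \<Rightarrow> (nat \<times> 'a bvh, 'k) fexpr \<Rightarrow> (nat \<times> 'a bvh, 'k) fexpr" where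
  "shiftT n = subst (\<lambda>(m, g). Gen (m + n, g))"

definition IdDlt :: "'a \<Rightarrow> 'a \<Rightarrow> 'a set \<Rightarrow> 'a set \<Rightarrow> nat \<times> 'a bvh \<Rightarrow> (nat \<times> 'a bvh, 'k::ring_1) fexpr" where
  "IdDlt x1 x2 I1 I2 = (\<lambda>(m, g). if m = 0 then Gen (0, g) else shiftT 1 (delta_g x1 x2 I1 I2 g))"

definition DltId :: "'a \<Rightarrow> 'a \<Rightarrow> 'a set \<Rightarrow> 'a set \<Rightarrow> nat \<times> 'a bvh \<Rightarrow> (nat \<times> 'a bvh, 'k::ring_1) fexpr" where
  "DltId x1 x2 I1 I2 = (\<lambda>(m, g). if m = 0 then delta_g x1 x2 I1 I2 g else Gen (m + 1, g))"

fun ren :: "('a \<Rightarrow> 'b) \<Rightarrow> 'a bvh \<Rightarrow> 'b bvh" where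
  "ren f (th i j) = th (f i) (f j)"
| "ren f (Th i j k) = Th (f i) (f j) (f k)"

definition renT :: "(nat \<Rightarrow> 'a \<Rightarrow> 'a) \<Rightarrow> nat \<times> 'a bvh \<Rightarrow> (nat \<times> 'a bvh, 'k) fexpr" where
  "renT hs = (\<lambda>(m, g). Gen (m, ren (hs m) g))"

definition fix_pt :: "'a \<Rightarrow> ('a \<Rightarrow> 'a) \<Rightarrow> 'a \<Rightarrow> 'a" where
  "fix_pt x f = (\<lambda>a. if a = x then x else f a)"

end

theory Submission
  imports Defs
begin

text \<open>Delta respects the defining relations: the images of the symmetry of theta and of the
  two antisymmetries of Theta follow from the same relations in the tensor factors (the mixed
  terms caseA and caseB are antisymmetric in their two arguments from a common block), and
  graded commutativity survives because Delta sends each generator to a homogeneous element of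
  the same degree.  Naturality holds on the nose, generator by generator.  For coassociativity
  both sides are expanded on generators and compared as noncommutative polynomials; the only
  relation needed is that the two sides may name one generator of the middle factor as
  Theta_{x'' y' r} and as its cyclic rotation Theta_{r x'' y'}.\<close>

declare gc_trans [trans]

section \<open>Calculus of the congruence \<open>gc_eq\<close>\<close>

fun monom :: "'g list \<Rightarrow> ('g,'k::one) fexpr" where
  "monom [] = Sc 1"
| "monom (g # m) = Times (Gen g) (monom m)"

fun poly_expr :: "('k \<times> 'g list) list \<Rightarrow> ('g,'k::zero_neq_one) fexpr" where
  "poly_expr [] = Sc 0"
| "poly_expr ((c, m) # p) = Plus (Times (Sc c) (monom m)) (poly_expr p)"

definition poly_mult :: "('k::times \<times> 'g list) list \<Rightarrow> ('k \<times> 'g list) list \<Rightarrow> ('k \<times> 'g list) list" where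
  "poly_mult p q = concat (map (\<lambda>(c, m). map (\<lambda>(d, n). (c * d, m @ n)) q) p)"

text \<open>Equal coefficients give a sound but incomplete test for \<open>gc_eq\<close>: the relations
  enter only through the renaming.\<close>
fun normal_form :: "('g \<Rightarrow> 'g) \<Rightarrow> ('g,'k::{one,times}) fexpr \<Rightarrow> ('k \<times> 'g list) list" where
  "normal_form \<rho> (Gen g) = [(1, [\<rho> g])]"
| "normal_form \<rho> (Sc a) = [(a, [])]"
| "normal_form \<rho> (Plus a b) = normal_form \<rho> a @ normal_form \<rho> b"
| "normal_form \<rho> (Times a b) = poly_mult (normal_form \<rho> a) (normal_form \<rho> b)"

definition poly_coeff :: "('k::comm_monoid_add \<times> 'g list) list \<Rightarrow> 'g list \<Rightarrow> 'k" where
  "poly_coeff p m = sum_list (map (\<lambda>(c, n). if n = m then c else 0) p)"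

lemma poly_coeff_Cons: "poly_coeff ((c, m) # p) = (poly_coeff p)(m := c + poly_coeff p m)"
  by (rule ext) (simp add: poly_coeff_def)

definition koszul_sign :: "nat \<Rightarrow> nat \<Rightarrow> 'k::ring_1" where
  "koszul_sign n m = (if odd n \<and> odd m then -1 else 1)"

lemma koszul_sign_add_left: "koszul_sign (n1 + n2) m = koszul_sign n1 m * koszul_sign n2 m"
  by (auto simp: koszul_sign_def)

lemma koszul_sign_add_right: "koszul_sign n (m1 + m2) = koszul_sign n m1 * koszul_sign n m2"
  by (auto simp: koszul_sign_def)

lemma koszul_sign_0 [simp]: "koszul_sign n 0 = 1" "koszul_sign 0 m = 1"
  by (auto simp: koszul_sign_def)

context
  fixes od :: "'g \<Rightarrow> bool" and R :: "(('g,'k::field) fexpr \<times> ('g,'k) fexpr) set"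
begin

abbreviation gc_equiv :: "('g,'k) fexpr \<Rightarrow> ('g,'k) fexpr \<Rightarrow> bool" (infix "\<approx>" 50) where
  "a \<approx> b \<equiv> gc_eq od R a b"

lemma gc_plus_cong_left: "a \<approx> a' \<Longrightarrow> Plus a b \<approx> Plus a' b"
  by (simp add: gc_plus_cong gc_refl)

lemma gc_plus_cong_right: "b \<approx> b' \<Longrightarrow> Plus a b \<approx> Plus a b'"
  by (simp add: gc_plus_cong gc_refl)

lemma gc_times_cong_left: "a \<approx> a' \<Longrightarrow> Times a b \<approx> Times a' b"
  by (simp add: gc_times_cong gc_refl)

lemma gc_times_cong_right: "b \<approx> b' \<Longrightarrow> Times a b \<approx> Times a b'"
  by (simp add: gc_times_cong gc_refl)

lemma gc_plus_zero_left: "Plus (Sc 0) a \<approx> a"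
  using gc_plus_comm gc_plus_zero gc_trans by blast

lemma gc_plus_left_commute: "Plus a (Plus b c) \<approx> Plus b (Plus a c)"
proof -
  have "Plus a (Plus b c) \<approx> Plus (Plus a b) c" by (rule gc_sym, rule gc_plus_assoc)
  also have "\<dots> \<approx> Plus (Plus b a) c" by (rule gc_plus_cong_left, rule gc_plus_comm)
  also have "\<dots> \<approx> Plus b (Plus a c)" by (rule gc_plus_assoc)
  finally show ?thesis .
qed

lemma gc_times_zero_left: "Times (Sc 0) a \<approx> Sc 0"
proof -
  let ?z = "Times (Sc 0) a"
  have "?z \<approx> Times (Plus (Sc 0) (Sc 0)) a"
    by (rule gc_times_cong_left, rule gc_sym) (metis gc_sc_plus add_0)
  also have "\<dots> \<approx> Plus ?z ?z" by (rule gc_distrib_r)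
  finally have double: "?z \<approx> Plus ?z ?z" .
  have "Sc 0 \<approx> Plus ?z (Neg ?z)" by (rule gc_sym, rule gc_plus_neg)
  also have "\<dots> \<approx> Plus (Plus ?z ?z) (Neg ?z)" by (rule gc_plus_cong_left, rule double)
  also have "\<dots> \<approx> Plus ?z (Plus ?z (Neg ?z))" by (rule gc_plus_assoc)
  also have "\<dots> \<approx> Plus ?z (Sc 0)" by (rule gc_plus_cong_right, rule gc_plus_neg)
  also have "\<dots> \<approx> ?z" by (rule gc_plus_zero)
  finally show ?thesis by (rule gc_sym)
qed

lemma gc_times_zero_right: "Times a (Sc 0) \<approx> Sc 0"
  using gc_sc_central gc_sym gc_trans gc_times_zero_left by blast

lemma gc_sc_plus_distrib: "Plus (Times (Sc c) a) (Times (Sc d) a) \<approx> Times (Sc (c + d)) a"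
proof -
  have "Plus (Times (Sc c) a) (Times (Sc d) a) \<approx> Times (Plus (Sc c) (Sc d)) a"
    by (rule gc_sym, rule gc_distrib_r)
  also have "\<dots> \<approx> Times (Sc (c + d)) a" by (rule gc_times_cong_left, rule gc_sc_plus)
  finally show ?thesis .
qed

lemma gc_sc_times_assoc: "Times (Sc c) (Times (Sc d) a) \<approx> Times (Sc (c * d)) a"
proof -
  have "Times (Sc c) (Times (Sc d) a) \<approx> Times (Times (Sc c) (Sc d)) a"
    by (rule gc_sym, rule gc_times_assoc)
  also have "\<dots> \<approx> Times (Sc (c * d)) a" by (rule gc_times_cong_left, rule gc_sc_times)
  finally show ?thesis .
qed

lemma gc_sc_left_commute: "Times a (Times (Sc c) b) \<approx> Times (Sc c) (Times a b)"
proof -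
  have "Times a (Times (Sc c) b) \<approx> Times (Times a (Sc c)) b" by (rule gc_sym, rule gc_times_assoc)
  also have "\<dots> \<approx> Times (Times (Sc c) a) b" by (rule gc_times_cong_left, rule gc_sym, rule gc_sc_central)
  also have "\<dots> \<approx> Times (Sc c) (Times a b)" by (rule gc_times_assoc)
  finally show ?thesis .
qed

lemma gc_neg_neg: "Neg (Neg a) \<approx> a"
  using gc_sc_times_assoc[of "-1" "-1" a] gc_one_l[of od R a] by (simp add: gc_trans)

lemma gc_subst_cong: "(\<And>g. g \<in> gens_of e \<Longrightarrow> \<sigma> g \<approx> \<tau> g) \<Longrightarrow> subst \<sigma> e \<approx> subst \<tau> e"
  by (induction e) (auto intro: gc_eq.intros)

lemma gc_monom_append: "monom (m @ n) \<approx> Times (monom m) (monom n)"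
proof (induction m)
  case Nil
  show ?case by (simp, rule gc_sym, rule gc_one_l)
next
  case (Cons g m)
  have "Times (Gen g) (monom (m @ n)) \<approx> Times (Gen g) (Times (monom m) (monom n))"
    by (rule gc_times_cong_right, rule Cons)
  also have "\<dots> \<approx> Times (Times (Gen g) (monom m)) (monom n)" by (rule gc_sym, rule gc_times_assoc)
  finally show ?case by simp
qed

lemma gc_poly_expr_append: "poly_expr (p @ q) \<approx> Plus (poly_expr p) (poly_expr q)"
proof (induction p)
  case Nil
  show ?case by (simp, rule gc_sym, rule gc_plus_zero_left)
next
  case (Cons t p)
  obtain c m where t: "t = (c, m)" by force
  have "Plus (Times (Sc c) (monom m)) (poly_expr (p @ q))
          \<approx> Plus (Times (Sc c) (monom m)) (Plus (poly_expr p) (poly_expr q))"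
    by (rule gc_plus_cong_right, rule Cons)
  also have "\<dots> \<approx> Plus (Plus (Times (Sc c) (monom m)) (poly_expr p)) (poly_expr q)"
    by (rule gc_sym, rule gc_plus_assoc)
  finally show ?case by (simp add: t)
qed

lemma gc_term_mult:
  "Times (Times (Sc c) (monom m)) (Times (Sc d) (monom n)) \<approx> Times (Sc (c * d)) (monom (m @ n))"
proof -
  have "Times (Times (Sc c) (monom m)) (Times (Sc d) (monom n))
          \<approx> Times (Sc c) (Times (monom m) (Times (Sc d) (monom n)))" by (rule gc_times_assoc)
  also have "\<dots> \<approx> Times (Sc c) (Times (Sc d) (Times (monom m) (monom n)))"
    by (rule gc_times_cong_right, rule gc_sc_left_commute)
  also have "\<dots> \<approx> Times (Sc (c * d)) (Times (monom m) (monom n))" by (rule gc_sc_times_assoc)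
  also have "\<dots> \<approx> Times (Sc (c * d)) (monom (m @ n))"
    by (rule gc_times_cong_right, rule gc_sym, rule gc_monom_append)
  finally show ?thesis .
qed

lemma gc_poly_expr_term_mult:
  "poly_expr (map (\<lambda>(d, n). (c * d, m @ n)) q) \<approx> Times (Times (Sc c) (monom m)) (poly_expr q)"
proof (induction q)
  case Nil
  show ?case by (simp, rule gc_sym, rule gc_times_zero_right)
next
  case (Cons t q)
  obtain d n where t: "t = (d, n)" by force
  let ?t = "Times (Sc c) (monom m)"
  have "Plus (Times (Sc (c * d)) (monom (m @ n))) (poly_expr (map (\<lambda>(d, n). (c * d, m @ n)) q))
          \<approx> Plus (Times ?t (Times (Sc d) (monom n))) (Times ?t (poly_expr q))"
    by (rule gc_plus_cong, rule gc_sym, rule gc_term_mult, rule Cons)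
  also have "\<dots> \<approx> Times ?t (Plus (Times (Sc d) (monom n)) (poly_expr q))"
    by (rule gc_sym, rule gc_distrib_l)
  finally show ?case by (simp add: t)
qed

lemma gc_poly_expr_mult: "poly_expr (poly_mult p q) \<approx> Times (poly_expr p) (poly_expr q)"
proof (induction p)
  case Nil
  show ?case by (simp add: poly_mult_def, rule gc_sym, rule gc_times_zero_left)
next
  case (Cons t p)
  obtain c m where t: "t = (c, m)" by force
  have "poly_mult (t # p) q = map (\<lambda>(d, n). (c * d, m @ n)) q @ poly_mult p q"
    by (simp add: poly_mult_def t)
  then have "poly_expr (poly_mult (t # p) q)
      \<approx> Plus (poly_expr (map (\<lambda>(d, n). (c * d, m @ n)) q)) (poly_expr (poly_mult p q))"
    using gc_poly_expr_append by simp
  also have "\<dots> \<approx> Plus (Times (Times (Sc c) (monom m)) (poly_expr q)) (Times (poly_expr p) (poly_expr q))"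
    by (rule gc_plus_cong, rule gc_poly_expr_term_mult, rule Cons)
  also have "\<dots> \<approx> Times (poly_expr (t # p)) (poly_expr q)"
    by (simp add: t, rule gc_sym, rule gc_distrib_r)
  finally show ?case .
qed

lemma gc_normal_form:
  assumes "\<And>g. Gen g \<approx> Gen (\<rho> g)"
  shows "e \<approx> poly_expr (normal_form \<rho> e)"
proof (induction e)
  case (Gen g)
  have "Gen (\<rho> g) \<approx> Plus (Times (Sc 1) (Times (Gen (\<rho> g)) (Sc 1))) (Sc 0)"
    by (rule gc_sym, rule gc_trans, rule gc_plus_zero, rule gc_trans, rule gc_one_l, rule gc_one_r)
  with assms show ?case by (auto intro: gc_trans)
next
  case (Sc a)
  have "Sc a \<approx> Plus (Times (Sc a) (Sc 1)) (Sc 0)"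
    by (rule gc_sym, rule gc_trans, rule gc_plus_zero, rule gc_one_r)
  then show ?case by simp
next
  case (Plus a b)
  then have "Plus a b \<approx> Plus (poly_expr (normal_form \<rho> a)) (poly_expr (normal_form \<rho> b))"
    by (rule gc_plus_cong)
  then show ?case using gc_poly_expr_append gc_sym gc_trans by fastforce
next
  case (Times a b)
  then have "Times a b \<approx> Times (poly_expr (normal_form \<rho> a)) (poly_expr (normal_form \<rho> b))"
    by (rule gc_times_cong)
  then show ?case using gc_poly_expr_mult gc_sym gc_trans by fastforce
qed

lemma gc_poly_expr_zero: "poly_expr (map (\<lambda>m. (0, m)) ms) \<approx> Sc 0"
proof (induction ms)
  case Nil
  then show ?case by (simp add: gc_refl)
next
  case (Cons m ms)
  have "Plus (Times (Sc 0) (monom m)) (poly_expr (map (\<lambda>m. (0, m)) ms)) \<approx> Plus (Sc 0) (Sc 0)"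
    by (rule gc_plus_cong, rule gc_times_zero_left, rule Cons)
  also have "\<dots> \<approx> Sc 0" by (rule gc_plus_zero)
  finally show ?case by simp
qed

lemma gc_poly_expr_add_term:
  assumes "distinct ms" "m \<in> set ms"
  shows "Plus (Times (Sc c) (monom m)) (poly_expr (map (\<lambda>m. (f m, m)) ms))
           \<approx> poly_expr (map (\<lambda>n. ((f(m := c + f m)) n, n)) ms)"
  using assms
proof (induction ms)
  case Nil
  then show ?case by simp
next
  case (Cons n ms)
  let ?rest = "poly_expr (map (\<lambda>m. (f m, m)) ms)"
  show ?case
  proof (cases "n = m")
    case True
    with Cons.prems have "m \<notin> set ms" by simp
    then have unchanged: "map (\<lambda>n. ((f(m := c + f m)) n, n)) ms = map (\<lambda>m. (f m, m)) ms"
      by (auto intro: map_cong)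
    have "Plus (Times (Sc c) (monom m)) (Plus (Times (Sc (f m)) (monom m)) ?rest)
        \<approx> Plus (Plus (Times (Sc c) (monom m)) (Times (Sc (f m)) (monom m))) ?rest"
      by (rule gc_sym, rule gc_plus_assoc)
    also have "\<dots> \<approx> Plus (Times (Sc (c + f m)) (monom m)) ?rest"
      by (rule gc_plus_cong_left, rule gc_sc_plus_distrib)
    finally show ?thesis using True by (simp add: unchanged[unfolded fun_upd_apply])
  next
    case False
    with Cons.prems have ms: "distinct ms" "m \<in> set ms" by auto
    have "Plus (Times (Sc c) (monom m)) (Plus (Times (Sc (f n)) (monom n)) ?rest)
        \<approx> Plus (Times (Sc (f n)) (monom n)) (Plus (Times (Sc c) (monom m)) ?rest)"
      by (rule gc_plus_left_commute)
    also have "\<dots> \<approx> Plus (Times (Sc (f n)) (monom n)) (poly_expr (map (\<lambda>n. ((f(m := c + f m)) n, n)) ms))"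
      by (rule gc_plus_cong_right, rule Cons.IH[OF ms])
    finally show ?thesis using False by simp
  qed
qed

lemma gc_poly_expr_collect:
  assumes "snd ` set p \<subseteq> set ms" "distinct ms"
  shows "poly_expr p \<approx> poly_expr (map (\<lambda>m. (poly_coeff p m, m)) ms)"
  using assms
proof (induction p)
  case Nil
  have "Sc 0 \<approx> poly_expr (map (\<lambda>m. (0, m)) ms)" by (rule gc_sym, rule gc_poly_expr_zero)
  then show ?case by (simp add: poly_coeff_def)
next
  case (Cons t p)
  obtain c m where t: "t = (c, m)" by force
  with Cons.prems have m: "m \<in> set ms" and p: "snd ` set p \<subseteq> set ms" by auto
  have "Plus (Times (Sc c) (monom m)) (poly_expr p)
      \<approx> Plus (Times (Sc c) (monom m)) (poly_expr (map (\<lambda>m. (poly_coeff p m, m)) ms))"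
    by (rule gc_plus_cong_right, rule Cons.IH[OF p Cons.prems(2)])
  also have "\<dots> \<approx> poly_expr (map (\<lambda>n. (((poly_coeff p)(m := c + poly_coeff p m)) n, n)) ms)"
    by (rule gc_poly_expr_add_term[OF Cons.prems(2) m])
  finally show ?case by (simp add: t poly_coeff_Cons)
qed

lemma gc_poly_expr_eqI:
  assumes "\<And>m. poly_coeff p m = poly_coeff q m"
  shows "poly_expr p \<approx> poly_expr q"
proof -
  let ?ms = "remdups (map snd (p @ q))"
  have "poly_expr p \<approx> poly_expr (map (\<lambda>m. (poly_coeff p m, m)) ?ms)"
    by (rule gc_poly_expr_collect) auto
  also have "map (\<lambda>m. (poly_coeff p m, m)) ?ms = map (\<lambda>m. (poly_coeff q m, m)) ?ms"
    using assms by simp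
  also have "poly_expr \<dots> \<approx> poly_expr q"
    by (rule gc_sym, rule gc_poly_expr_collect) auto
  finally show ?thesis .
qed

lemma gc_eq_by_normal_form:
  assumes "\<And>g. Gen g \<approx> Gen (\<rho> g)"
    and "\<And>w. poly_coeff (normal_form \<rho> a) w = poly_coeff (normal_form \<rho> b) w"
  shows "a \<approx> b"
proof -
  have "a \<approx> poly_expr (normal_form \<rho> a)" using assms(1) by (rule gc_normal_form)
  also have "\<dots> \<approx> poly_expr (normal_form \<rho> b)" using assms(2) by (rule gc_poly_expr_eqI)
  also have "\<dots> \<approx> b" using assms(1) by (rule gc_sym[OF gc_normal_form])
  finally show ?thesis .
qed

lemma gc_eq_by_coeffs:
  "(\<And>w. poly_coeff (normal_form id a) w = poly_coeff (normal_form id b) w) \<Longrightarrow> a \<approx> b"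
  by (rule gc_eq_by_normal_form[where \<rho> = id]) (simp_all add: gc_refl)

lemma gc_gen_homog_commute:
  assumes od_dg: "\<And>g. od g = odd (dg g)" and "homog dg f m"
  shows "Times (Gen g) f \<approx> Times (Sc (koszul_sign (dg g) m)) (Times f (Gen g))"
  using assms(2)
proof (induction rule: homog.induct)
  case (homog_gen h)
  have "(if od g \<and> od h then -1 else 1) = (koszul_sign (dg g) (dg h) :: 'k)"
    by (simp add: koszul_sign_def od_dg)
  then show ?case using gc_gen_comm[of od R g h] by simp
next
  case (homog_sc a)
  have "Times (Gen g) (Sc a) \<approx> Times (Sc a) (Gen g)" by (rule gc_sym, rule gc_sc_central)
  also have "\<dots> \<approx> Times (Sc 1) (Times (Sc a) (Gen g))" by (rule gc_sym, rule gc_one_l)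
  finally show ?case by simp
next
  case (homog_zero n)
  have "Times (Sc (koszul_sign (dg g) n)) (Times (Sc 0) (Gen g)) \<approx> Sc 0"
    by (rule gc_trans, rule gc_times_cong_right, rule gc_times_zero_left, rule gc_times_zero_right)
  then show ?case by (meson gc_sym gc_trans gc_times_zero_right)
next
  case (homog_plus a n b)
  let ?s = "Sc (koszul_sign (dg g) n)"
  have "Times (Gen g) (Plus a b) \<approx> Plus (Times (Gen g) a) (Times (Gen g) b)" by (rule gc_distrib_l)
  also have "\<dots> \<approx> Plus (Times ?s (Times a (Gen g))) (Times ?s (Times b (Gen g)))"
    by (rule gc_plus_cong, rule homog_plus.IH(1), rule homog_plus.IH(2))
  also have "\<dots> \<approx> Times ?s (Plus (Times a (Gen g)) (Times b (Gen g)))" by (rule gc_sym, rule gc_distrib_l)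
  also have "\<dots> \<approx> Times ?s (Times (Plus a b) (Gen g))"
    by (rule gc_times_cong_right, rule gc_sym, rule gc_distrib_r)
  finally show ?case .
next
  case (homog_times a n b m)
  let ?s = "koszul_sign (dg g) n" and ?t = "koszul_sign (dg g) m"
  have "Times (Gen g) (Times a b) \<approx> Times (Times (Gen g) a) b" by (rule gc_sym, rule gc_times_assoc)
  also have "\<dots> \<approx> Times (Times (Sc ?s) (Times a (Gen g))) b"
    by (rule gc_times_cong_left, rule homog_times.IH(1))
  also have "\<dots> \<approx> Times (Sc ?s) (Times (Times a (Gen g)) b)" by (rule gc_times_assoc)
  also have "\<dots> \<approx> Times (Sc ?s) (Times a (Times (Gen g) b))"
    by (rule gc_times_cong_right, rule gc_times_assoc)
  also have "\<dots> \<approx> Times (Sc ?s) (Times a (Times (Sc ?t) (Times b (Gen g))))"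
    by (rule gc_times_cong_right, rule gc_times_cong_right, rule homog_times.IH(2))
  also have "\<dots> \<approx> Times (Sc ?s) (Times (Sc ?t) (Times a (Times b (Gen g))))"
    by (rule gc_times_cong_right, rule gc_sc_left_commute)
  also have "\<dots> \<approx> Times (Sc (?s * ?t)) (Times a (Times b (Gen g)))" by (rule gc_sc_times_assoc)
  also have "\<dots> \<approx> Times (Sc (?s * ?t)) (Times (Times a b) (Gen g))"
    by (rule gc_times_cong_right, rule gc_sym, rule gc_times_assoc)
  finally show ?case by (simp add: koszul_sign_add_right)
qed

lemma gc_homog_commute:
  assumes od_dg: "\<And>g. od g = odd (dg g)" and "homog dg e n" "homog dg f m"
  shows "Times e f \<approx> Times (Sc (koszul_sign n m)) (Times f e)"
  using assms(2)
proof (induction rule: homog.induct)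
  case (homog_gen g)
  show ?case using od_dg assms(3) by (rule gc_gen_homog_commute)
next
  case (homog_sc a)
  have "Times (Sc a) f \<approx> Times f (Sc a)" by (rule gc_sc_central)
  also have "\<dots> \<approx> Times (Sc 1) (Times f (Sc a))" by (rule gc_sym, rule gc_one_l)
  finally show ?case by simp
next
  case (homog_zero n)
  have "Times (Sc (koszul_sign n m)) (Times f (Sc 0)) \<approx> Sc 0"
    by (rule gc_trans, rule gc_times_cong_right, rule gc_times_zero_right, rule gc_times_zero_right)
  then show ?case by (meson gc_sym gc_trans gc_times_zero_left)
next
  case (homog_plus a n b)
  let ?s = "Sc (koszul_sign n m)"
  have "Times (Plus a b) f \<approx> Plus (Times a f) (Times b f)" by (rule gc_distrib_r)
  also have "\<dots> \<approx> Plus (Times ?s (Times f a)) (Times ?s (Times f b))"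
    by (rule gc_plus_cong, rule homog_plus.IH(1), rule homog_plus.IH(2))
  also have "\<dots> \<approx> Times ?s (Plus (Times f a) (Times f b))" by (rule gc_sym, rule gc_distrib_l)
  also have "\<dots> \<approx> Times ?s (Times f (Plus a b))"
    by (rule gc_times_cong_right, rule gc_sym, rule gc_distrib_l)
  finally show ?case .
next
  case (homog_times a n1 b n2)
  let ?s = "koszul_sign n1 m" and ?t = "koszul_sign n2 m"
  have "Times (Times a b) f \<approx> Times a (Times b f)" by (rule gc_times_assoc)
  also have "\<dots> \<approx> Times a (Times (Sc ?t) (Times f b))"
    by (rule gc_times_cong_right, rule homog_times.IH(2))
  also have "\<dots> \<approx> Times (Sc ?t) (Times a (Times f b))" by (rule gc_sc_left_commute)
  also have "\<dots> \<approx> Times (Sc ?t) (Times (Times a f) b)"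
    by (rule gc_times_cong_right, rule gc_sym, rule gc_times_assoc)
  also have "\<dots> \<approx> Times (Sc ?t) (Times (Times (Sc ?s) (Times f a)) b)"
    by (rule gc_times_cong_right, rule gc_times_cong_left, rule homog_times.IH(1))
  also have "\<dots> \<approx> Times (Sc ?t) (Times (Sc ?s) (Times (Times f a) b))"
    by (rule gc_times_cong_right, rule gc_times_assoc)
  also have "\<dots> \<approx> Times (Sc (?t * ?s)) (Times (Times f a) b)" by (rule gc_sc_times_assoc)
  also have "\<dots> \<approx> Times (Sc (?t * ?s)) (Times f (Times a b))"
    by (rule gc_times_cong_right, rule gc_times_assoc)
  finally show ?case by (simp add: koszul_sign_add_left mult.commute)
qed

end

lemma gc_eq_subst:
  assumes "gc_eq od R a b"
    and od_dg: "\<And>g. od g = odd (dg g)" and od'_dg': "\<And>h. od' h = odd (dg' h)"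
    and homog: "\<And>g. homog dg' (\<sigma> g) (dg g)"
    and rels: "\<And>a b. (a, b) \<in> R \<Longrightarrow> gc_eq od' R' (subst \<sigma> a) (subst \<sigma> b)"
  shows "gc_eq od' R' (subst \<sigma> a) (subst \<sigma> b)"
  using assms(1)
proof (induction rule: gc_eq.induct)
  case (gc_gen_comm g h)
  have "gc_eq od' R' (Times (\<sigma> g) (\<sigma> h))
      (Times (Sc (koszul_sign (dg g) (dg h))) (Times (\<sigma> h) (\<sigma> g)))"
    by (rule gc_homog_commute[OF od'_dg' homog homog])
  then show ?case by (simp add: koszul_sign_def od_dg)
next
  case (gc_rel a b)
  then show ?case by (rule rels)
qed (auto intro: gc_eq.intros)

section \<open>The cocomposition is a morphism of graded algebras\<close>

lemma teq_refl: "teq Ss a a"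
  unfolding teq_def by (rule gc_refl)

lemma teq_trans [trans]: "teq Ss a b \<Longrightarrow> teq Ss b c \<Longrightarrow> teq Ss a c"
  unfolding teq_def by (rule gc_trans)

lemma teq_trels: "(a, b) \<in> trels Ss \<Longrightarrow> teq Ss a b"
  unfolding teq_def by (rule gc_rel)

lemma teq_th_sym:
  "m < length Ss \<Longrightarrow> i \<in> Ss ! m \<Longrightarrow> j \<in> Ss ! m \<Longrightarrow> i \<noteq> j
    \<Longrightarrow> teq Ss (Gen (m, th i j)) (Gen (m, th j i))"
  by (rule teq_trels) (auto simp: trels_def)

lemma teq_Th_antisym:
  assumes "m < length Ss" "i \<in> Ss ! m" "j \<in> Ss ! m" "k \<in> Ss ! m"
  shows teq_Th_antisym12: "teq Ss (Gen (m, Th i j k)) (Neg (Gen (m, Th j i k)))"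
    and teq_Th_antisym23: "teq Ss (Gen (m, Th i j k)) (Neg (Gen (m, Th i k j)))"
  using assms by (auto intro: teq_trels simp: trels_def)

lemma tdeg_Pair [simp]: "tdeg (m, g) = bdeg g"
  by (simp add: tdeg_def)

lemma teq_subst_cong_wf:
  assumes "wf_over (tgens [S]) e" "\<And>g. g \<in> bvh_gens S \<Longrightarrow> teq Ts (\<sigma> (0, g)) (\<tau> (0, g))"
  shows "teq Ts (subst \<sigma> e) (subst \<tau> e)"
  using assms unfolding teq_def wf_over_def tgens_def
  by (intro gc_subst_cong) auto

lemma odd_bdeg_tdeg: "(\<lambda>(m, g). odd (bdeg g)) g = odd (tdeg g)"
  by (cases g) simp

lemma homog_Neg: "homog dg a n \<Longrightarrow> homog dg (Neg a) n"
  using homog_times[OF homog_sc] by fastforce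

lemma homog_Lf: "n = bdeg g \<Longrightarrow> homog tdeg (Lf g) n"
  unfolding Lf_def using homog_gen[of tdeg "(0, g)"] by (simp add: tdeg_def)

lemma homog_Rf: "n = bdeg g \<Longrightarrow> homog tdeg (Rf g) n"
  unfolding Rf_def using homog_gen[of tdeg "(1, g)"] by (simp add: tdeg_def)

lemma homog_times_one_one: "homog dg a 1 \<Longrightarrow> homog dg b 1 \<Longrightarrow> homog dg (Times a b) 2"
  using homog_times[of dg a 1 b 1] by (simp add: numeral_2_eq_2)

lemma homog_caseA: "homog tdeg (caseA x1 x2 i j k) 2"
  unfolding caseA_def
  by (intro homog_plus homog_Neg homog_Lf homog_Rf homog_times_one_one) simp_all

lemma homog_caseB: "homog tdeg (caseB x1 x2 i j k) 2"
  unfolding caseB_def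
  by (intro homog_plus homog_Neg homog_Lf homog_Rf homog_times_one_one) simp_all

lemma homog_delta_g: "homog tdeg (delta_g x1 x2 I1 I2 g) (bdeg g)"
  by (cases g) (simp_all add: homog_caseA homog_caseB homog_Lf homog_Rf homog_plus)

lemma homog_Dlt: "homog tdeg (Dlt x1 x2 I1 I2 g) (tdeg g)"
  by (cases g) (simp add: Dlt_def homog_delta_g)

lemma teq_caseA_antisym:
  assumes "p \<in> I" "q \<in> I"
  shows "teq [insert x1 I, J] (caseA x1 x2 p q r) (Neg (caseA x1 x2 q p r))"
proof -
  have "teq [insert x1 I, J] (Lf (Th p q x1)) (Neg (Lf (Th q p x1)))"
    using assms unfolding Lf_def by (intro teq_Th_antisym12) auto
  then have "teq [insert x1 I, J] (caseA x1 x2 p q r)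
      (Minus (Neg (Lf (Th q p x1))) (Times (Minus (Lf (th p x1)) (Lf (th q x1))) (Rf (th x2 r))))"
    unfolding teq_def caseA_def by (rule gc_plus_cong_left)
  also have "teq [insert x1 I, J] \<dots> (Neg (caseA x1 x2 q p r))"
    unfolding teq_def
    by (rule gc_eq_by_coeffs) (simp add: caseA_def Lf_def Rf_def poly_mult_def poly_coeff_def)
  finally show ?thesis .
qed

lemma teq_caseB_antisym:
  assumes "q \<in> I" "r \<in> I"
  shows "teq [J, insert x2 I] (caseB x1 x2 p q r) (Neg (caseB x1 x2 p r q))"
proof -
  have "teq [J, insert x2 I] (Rf (Th x2 q r)) (Neg (Rf (Th x2 r q)))"
    using assms unfolding Rf_def by (intro teq_Th_antisym23) auto
  then have "teq [J, insert x2 I] (caseB x1 x2 p q r)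
      (Plus (Neg (Rf (Th x2 r q))) (Times (Lf (th p x1)) (Minus (Rf (th x2 q)) (Rf (th x2 r)))))"
    unfolding teq_def caseB_def by (rule gc_plus_cong_left)
  also have "teq [J, insert x2 I] \<dots> (Neg (caseB x1 x2 p r q))"
    unfolding teq_def
    by (rule gc_eq_by_coeffs) (simp add: caseB_def Lf_def Rf_def poly_mult_def poly_coeff_def)
  finally show ?thesis .
qed

context
  fixes I1 I2 :: "'a set" and x1 x2 :: 'a
  assumes disjoint: "I1 \<inter> I2 = {}"
begin

lemma in_one_block: "i \<in> I1 \<union> I2 \<Longrightarrow> (i \<in> I1 \<and> i \<notin> I2) \<or> (i \<in> I2 \<and> i \<notin> I1)"
  using disjoint by blast

lemma teq_delta_g_th_sym:
  assumes "i \<in> I1 \<union> I2" "j \<in> I1 \<union> I2" "i \<noteq> j"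
  shows "teq [insert x1 I1, insert x2 I2] (delta_g x1 x2 I1 I2 (th i j)) (delta_g x1 x2 I1 I2 (th j i))"
  using in_one_block[OF assms(1)] in_one_block[OF assms(2)] \<open>i \<noteq> j\<close>
  by (elim disjE conjE; simp add: Lf_def Rf_def teq_th_sym teq_refl)

lemma teq_delta_g_Th_antisym:
  assumes "i \<in> I1 \<union> I2" "j \<in> I1 \<union> I2" "k \<in> I1 \<union> I2"
  shows "teq [insert x1 I1, insert x2 I2]
           (delta_g x1 x2 I1 I2 (Th i j k)) (Neg (delta_g x1 x2 I1 I2 (Th j i k)))"
    and "teq [insert x1 I1, insert x2 I2]
           (delta_g x1 x2 I1 I2 (Th i j k)) (Neg (delta_g x1 x2 I1 I2 (Th i k j)))"
  using in_one_block[OF assms(1)] in_one_block[OF assms(2)] in_one_block[OF assms(3)]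
  by (elim disjE conjE; simp add: Lf_def Rf_def teq_Th_antisym teq_caseA_antisym teq_caseB_antisym)+

lemma teq_subst_Dlt_trels:
  assumes "(a, b) \<in> trels [I1 \<union> I2]"
  shows "teq [insert x1 I1, insert x2 I2] (subst (Dlt x1 x2 I1 I2) a) (subst (Dlt x1 x2 I1 I2) b)"
  using assms unfolding trels_def
  by (auto simp del: delta_g.simps simp: Dlt_def teq_delta_g_th_sym teq_delta_g_Th_antisym)

lemma gens_of_delta_g:
  assumes "x1 \<notin> I1 \<union> I2" "x2 \<notin> I1 \<union> I2" "g \<in> bvh_gens (I1 \<union> I2)"
  shows "gens_of (delta_g x1 x2 I1 I2 g) \<subseteq> tgens [insert x1 I1, insert x2 I2]"
  using assms disjoint
  by (cases g) (auto simp: bvh_gens_def tgens_def Lf_def Rf_def caseA_def caseB_def)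

lemma is_tmorph_Dlt:
  assumes "x1 \<notin> I1 \<union> I2" "x2 \<notin> I1 \<union> I2"
  shows "is_tmorph [I1 \<union> I2] [insert x1 I1, insert x2 I2] (Dlt x1 x2 I1 I2)"
  unfolding is_tmorph_def
proof (intro conjI ballI allI impI)
  fix g :: "nat \<times> 'a bvh"
  assume "g \<in> tgens [I1 \<union> I2]"
  then obtain m g' where "g = (m, g')" "g' \<in> bvh_gens (I1 \<union> I2)"
    by (auto simp: tgens_def)
  then have wf: "wf_over (tgens [insert x1 I1, insert x2 I2]) (Dlt x1 x2 I1 I2 g)"
    unfolding wf_over_def Dlt_def using gens_of_delta_g[OF assms] by simp
  then show "wf_over (tgens [insert x1 I1, insert x2 I2]) (Dlt x1 x2 I1 I2 g)" .
  show "\<exists>e. wf_over (tgens [insert x1 I1, insert x2 I2]) e \<and>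
      teq [insert x1 I1, insert x2 I2] (Dlt x1 x2 I1 I2 g) e \<and> homog tdeg e (tdeg g)"
    using wf homog_Dlt[of x1 x2 I1 I2 g] teq_refl by blast
next
  fix a b
  assume "teq [I1 \<union> I2] a b"
  then show "teq [insert x1 I1, insert x2 I2] (subst (Dlt x1 x2 I1 I2) a) (subst (Dlt x1 x2 I1 I2) b)"
    unfolding teq_def
    by (rule gc_eq_subst[where dg = tdeg and dg' = tdeg])
      (use odd_bdeg_tdeg homog_Dlt teq_subst_Dlt_trels[unfolded teq_def] in auto)
qed

end

section \<open>Naturality\<close>

lemma subst_subst: "subst \<sigma> (subst \<tau> e) = subst (\<lambda>g. subst \<sigma> (\<tau> g)) e"
  by (induction e) auto

lemma subst_cong: "(\<And>g. g \<in> gens_of e \<Longrightarrow> \<sigma> g = \<tau> g) \<Longrightarrow> subst \<sigma> e = subst \<tau> e"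
  by (induction e) auto

lemma delta_g_ren:
  assumes disjoint: "I1 \<inter> I2 = {}" and inj: "inj_on f (I1 \<union> I2)"
    and fresh: "x1 \<notin> I1 \<union> I2" "x2 \<notin> I1 \<union> I2"
    and g: "g \<in> bvh_gens (I1 \<union> I2)"
  shows "delta_g x1 x2 (f ` I1) (f ` I2) (ren f g)
     = subst (renT (\<lambda>m. if m = 0 then fix_pt x1 f else fix_pt x2 f)) (delta_g x1 x2 I1 I2 g)"
proof -
  have block: "(f i \<in> f ` I1 \<and> f i \<notin> f ` I2 \<and> i \<in> I1 \<and> i \<notin> I2
              \<or> f i \<in> f ` I2 \<and> f i \<notin> f ` I1 \<and> i \<in> I2 \<and> i \<notin> I1)
     \<and> fix_pt x1 f i = f i \<and> fix_pt x2 f i = f i" if "i \<in> I1 \<union> I2" for i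
  proof -
    have "f i \<in> f ` I1 \<longleftrightarrow> i \<in> I1" "f i \<in> f ` I2 \<longleftrightarrow> i \<in> I2"
      using inj that by (auto simp: inj_on_def)
    then show ?thesis using that disjoint fresh by (auto simp: fix_pt_def)
  qed
  have fixed: "fix_pt x1 f x1 = x1" "fix_pt x2 f x2 = x2" by (auto simp: fix_pt_def)
  show ?thesis
  proof (cases g)
    case (th i j)
    with g have "i \<in> I1 \<union> I2" "j \<in> I1 \<union> I2" by (auto simp: bvh_gens_def)
    from block[OF this(1)] block[OF this(2)] show ?thesis unfolding th
      by (elim disjE conjE; simp add: fixed Lf_def Rf_def renT_def)
  next
    case (Th i j k)
    with g have "i \<in> I1 \<union> I2" "j \<in> I1 \<union> I2" "k \<in> I1 \<union> I2" by (auto simp: bvh_gens_def)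
    from block[OF this(1)] block[OF this(2)] block[OF this(3)] show ?thesis unfolding Th
      by (elim disjE conjE; simp add: fixed Lf_def Rf_def renT_def caseA_def caseB_def)
  qed
qed

lemma subst_Dlt_renT:
  assumes "I1 \<inter> I2 = {}" "inj_on f (I1 \<union> I2)" "x1 \<notin> I1 \<union> I2" "x2 \<notin> I1 \<union> I2"
    and e: "wf_over (tgens [I1 \<union> I2]) e"
  shows "subst (Dlt x1 x2 (f ` I1) (f ` I2)) (subst (renT (\<lambda>_. f)) e)
       = subst (renT (\<lambda>m. if m = 0 then fix_pt x1 f else fix_pt x2 f)) (subst (Dlt x1 x2 I1 I2) e)"
  unfolding subst_subst
proof (rule subst_cong)
  fix g
  assume "g \<in> gens_of e"
  with e obtain g' where "g = (0, g')" "g' \<in> bvh_gens (I1 \<union> I2)"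
    by (auto simp: wf_over_def tgens_def)
  with delta_g_ren[OF assms(1-4)] show "subst (Dlt x1 x2 (f ` I1) (f ` I2)) (renT (\<lambda>_. f) g)
      = subst (renT (\<lambda>m. if m = 0 then fix_pt x1 f else fix_pt x2 f)) (Dlt x1 x2 I1 I2 g)"
    by (simp add: renT_def Dlt_def)
qed

section \<open>Coassociativity\<close>

definition rotate_gen :: "'a \<Rightarrow> 'a \<Rightarrow> 'a set \<Rightarrow> nat \<times> 'a bvh \<Rightarrow> nat \<times> 'a bvh" where
  "rotate_gen x y I g = (case g of
      (m, Th p q r) \<Rightarrow> if m = 1 \<and> p = x \<and> q = y \<and> r \<in> I then (1, Th r x y) else g
    | _ \<Rightarrow> g)"

lemma teq_Th_rotate:
  assumes "m < length Ss" "p \<in> Ss ! m" "q \<in> Ss ! m" "r \<in> Ss ! m"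
  shows "teq Ss (Gen (m, Th p q r)) (Gen (m, Th r p q))"
proof -
  have "teq Ss (Gen (m, Th p q r)) (Neg (Gen (m, Th p r q)))"
    using assms by (rule teq_Th_antisym23)
  also have "teq Ss \<dots> (Neg (Neg (Gen (m, Th r p q))))"
    using teq_Th_antisym12[OF assms(1,2,4,3)] unfolding teq_def by (rule gc_times_cong_right)
  also have "teq Ss \<dots> (Gen (m, Th r p q))"
    unfolding teq_def by (rule gc_neg_neg)
  finally show ?thesis .
qed

lemma teq_Gen_rotate_gen:
  assumes "1 < length Ss" "x \<in> Ss ! 1" "y \<in> Ss ! 1" "I \<subseteq> Ss ! 1"
  shows "teq Ss (Gen g) (Gen (rotate_gen x y I g))"
  using assms teq_Th_rotate[OF assms(1-3)]
  by (auto simp: rotate_gen_def teq_refl split: prod.split bvh.split)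

context
  fixes I1 I2 I3 :: "'a set" and x1 x2 y1 y2 :: 'a
  assumes disjoint: "I1 \<inter> I2 = {}" "I1 \<inter> I3 = {}" "I2 \<inter> I3 = {}"
    and distinct: "distinct [x1, x2, y1, y2]"
    and fresh: "set [x1, x2, y1, y2] \<inter> (I1 \<union> I2 \<union> I3) = {}"
begin

lemma in_one_of_three_blocks: "i \<in> I1 \<union> I2 \<union> I3 \<Longrightarrow>
    (i \<in> I1 \<and> i \<notin> I2 \<and> i \<notin> I3) \<or> (i \<notin> I1 \<and> i \<in> I2 \<and> i \<notin> I3) \<or> (i \<notin> I1 \<and> i \<notin> I2 \<and> i \<in> I3)"
  using disjoint by blast

lemma old_neq_new: "i \<in> I1 \<union> I2 \<union> I3 \<Longrightarrow>
    i \<noteq> x1 \<and> x1 \<noteq> i \<and> i \<noteq> x2 \<and> x2 \<noteq> i \<and> i \<noteq> y1 \<and> y1 \<noteq> i \<and> i \<noteq> y2 \<and> y2 \<noteq> i"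
  using fresh by auto

lemma new_notin_blocks:
  "x1 \<notin> I1" "x1 \<notin> I2" "x1 \<notin> I3" "x2 \<notin> I1" "x2 \<notin> I2" "x2 \<notin> I3"
  "y1 \<notin> I1" "y1 \<notin> I2" "y1 \<notin> I3" "y2 \<notin> I1" "y2 \<notin> I2" "y2 \<notin> I3"
  using fresh by auto

lemma new_distinct:
  "x1 \<noteq> x2" "x2 \<noteq> x1" "x1 \<noteq> y1" "y1 \<noteq> x1" "x1 \<noteq> y2" "y2 \<noteq> x1"
  "x2 \<noteq> y1" "y1 \<noteq> x2" "x2 \<noteq> y2" "y2 \<noteq> x2" "y1 \<noteq> y2" "y2 \<noteq> y1"
  using distinct by auto

lemma teq_by_normal_form:
  assumes "\<And>w. poly_coeff (normal_form (rotate_gen x2 y1 I2) a) w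
              = poly_coeff (normal_form (rotate_gen x2 y1 I2) b) w"
  shows "teq [insert x1 I1, insert x2 (insert y1 I2), insert y2 I3] a b"
proof -
  have "teq [insert x1 I1, insert x2 (insert y1 I2), insert y2 I3] (Gen g) (Gen (rotate_gen x2 y1 I2 g))"
    for g by (rule teq_Gen_rotate_gen) auto
  then show ?thesis
    using assms unfolding teq_def by (rule gc_eq_by_normal_form)
qed

lemma teq_coassoc_delta_g:
  assumes "g \<in> bvh_gens (I1 \<union> I2 \<union> I3)"
  shows "teq [insert x1 I1, insert x2 (insert y1 I2), insert y2 I3]
     (subst (DltId x1 x2 I1 (insert y1 I2)) (delta_g y1 y2 (I1 \<union> I2) I3 g))
     (subst (IdDlt y1 y2 (insert x2 I2) I3) (delta_g x1 x2 I1 (I2 \<union> I3) g))"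
proof (cases g)
  case (th i j)
  with assms have "i \<in> I1 \<union> I2 \<union> I3" "j \<in> I1 \<union> I2 \<union> I3" by (auto simp: bvh_gens_def)
  from in_one_of_three_blocks[OF this(1)] in_one_of_three_blocks[OF this(2)]
    old_neq_new[OF this(1)] old_neq_new[OF this(2)]
  show ?thesis unfolding th
    by (elim disjE conjE; intro teq_by_normal_form;
        simp add: new_notin_blocks new_distinct DltId_def IdDlt_def shiftT_def Lf_def Rf_def
          poly_mult_def poly_coeff_def rotate_gen_def)
next
  case (Th i j k)
  with assms have "i \<in> I1 \<union> I2 \<union> I3" "j \<in> I1 \<union> I2 \<union> I3" "k \<in> I1 \<union> I2 \<union> I3"
    by (auto simp: bvh_gens_def)
  from in_one_of_three_blocks[OF this(1)] in_one_of_three_blocks[OF this(2)]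
    in_one_of_three_blocks[OF this(3)] old_neq_new[OF this(1)] old_neq_new[OF this(2)]
    old_neq_new[OF this(3)]
  show ?thesis unfolding Th
    by (elim disjE conjE; intro teq_by_normal_form;
        simp add: new_notin_blocks new_distinct DltId_def IdDlt_def shiftT_def Lf_def Rf_def
          caseA_def caseB_def poly_mult_def poly_coeff_def rotate_gen_def)
qed

lemma teq_coassoc:
  assumes "wf_over (tgens [I1 \<union> I2 \<union> I3]) e"
  shows "teq [insert x1 I1, insert x2 (insert y1 I2), insert y2 I3]
     (subst (DltId x1 x2 I1 (insert y1 I2)) (subst (Dlt y1 y2 (I1 \<union> I2) I3) e))
     (subst (IdDlt y1 y2 (insert x2 I2) I3) (subst (Dlt x1 x2 I1 (I2 \<union> I3)) e))"
  unfolding subst_subst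
  by (rule teq_subst_cong_wf[OF assms]) (simp add: Dlt_def teq_coassoc_delta_g)

end

theorem lemma4p3p1:
  shows
   "(\<forall>(I1::'a set) I2 x1 x2.
       finite (I1 \<union> I2) \<and> I1 \<inter> I2 = {} \<and> I1 \<noteq> {} \<and> I2 \<noteq> {} \<and>
       x1 \<notin> I1 \<union> I2 \<and> x2 \<notin> I1 \<union> I2 \<and> x1 \<noteq> x2 \<longrightarrow>
       is_tmorph [I1 \<union> I2] [insert x1 I1, insert x2 I2]
         (Dlt x1 x2 I1 I2 :: _ \<Rightarrow> (_, 'k::field_char_0) fexpr))
  \<and> (\<forall>(f::'a \<Rightarrow> 'a) I1 I2 J x1 x2.
       finite (I1 \<union> I2) \<and> I1 \<inter> I2 = {} \<and> I1 \<noteq> {} \<and> I2 \<noteq> {} \<and>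
       bij_betw f (I1 \<union> I2) J \<and>
       x1 \<notin> I1 \<union> I2 \<union> J \<and> x2 \<notin> I1 \<union> I2 \<union> J \<and> x1 \<noteq> x2 \<longrightarrow>
       (\<forall>e::(nat \<times> 'a bvh, 'k) fexpr. wf_over (tgens [I1 \<union> I2]) e \<longrightarrow>
          teq [insert x1 (f ` I1), insert x2 (f ` I2)]
            (subst (Dlt x1 x2 (f ` I1) (f ` I2)) (subst (renT (\<lambda>_. f)) e))
            (subst (renT (\<lambda>m. if m = 0 then fix_pt x1 f else fix_pt x2 f))
               (subst (Dlt x1 x2 I1 I2) e))))
  \<and> (\<forall>(I1::'a set) I2 I3 x1 x2 y1 y2.
       finite (I1 \<union> I2 \<union> I3) \<and> I1 \<inter> I2 = {} \<and> I1 \<inter> I3 = {} \<and> I2 \<inter> I3 = {} \<and>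
       I1 \<noteq> {} \<and> I2 \<noteq> {} \<and> I3 \<noteq> {} \<and>
       distinct [x1, x2, y1, y2] \<and> set [x1, x2, y1, y2] \<inter> (I1 \<union> I2 \<union> I3) = {} \<longrightarrow>
       (\<forall>e::(nat \<times> 'a bvh, 'k) fexpr. wf_over (tgens [I1 \<union> I2 \<union> I3]) e \<longrightarrow>
          teq [insert x1 I1, insert x2 (insert y1 I2), insert y2 I3]
            (subst (DltId x1 x2 I1 (insert y1 I2)) (subst (Dlt y1 y2 (I1 \<union> I2) I3) e))
            (subst (IdDlt y1 y2 (insert x2 I2) I3) (subst (Dlt x1 x2 I1 (I2 \<union> I3)) e))))"
  apply (intro conjI allI impI)
  subgoal by (rule is_tmorph_Dlt) auto
  subgoal by (simp add: subst_Dlt_renT bij_betw_def teq_refl)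
  subgoal by (rule teq_coassoc) auto
  done

end
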